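(* Let $\Bbbk$ be an algebraically closed field of characteristic $2$ and let $\mathfrak{u}(\mathfrak{m})$ be the algebra generated by $a,b,c$ with relations $ab+ba=c$, $ac+ca=a$, $bc+cb=b$, $a^4=b^4=0$, $c^2+c=0$. For every finite-dimensional left $\mathfrak{u}(\mathfrak{m})$-module $V$, the Jordan normal form of the operator by which $a$ acts on $V$ has no Jordan block of size $2$. *)

theory Defs
  imports "HOL-Computational_Algebra.Polynomial" "Jordan_Normal_Form.Jordan_Normal_Form"
begin

definition um_module :: "nat \<Rightarrow> 'a::field mat \<Rightarrow> 'a mat \<Rightarrow> 'a mat \<Rightarrow> bool" where
  "um_module n A B C \<longleftrightarrow>
     A \<in> carrier_mat n n \<and> B \<in> carrier_mat n n \<and> C \<in> carrier_mat n n \<and>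
     A * B + B * A = C \<and>
     A * C + C * A = A \<and>
     B * C + C * B = B \<and>
     A ^\<^sub>m 4 = 0\<^sub>m n n \<and>
     B ^\<^sub>m 4 = 0\<^sub>m n n \<and>
     C * C + C = 0\<^sub>m n n"

end

theory Submission
  imports Defs
begin

text \<open>In characteristic 2 the relations give
  \<open>a = ac + ca = a(ab + ba) + (ab + ba)a = a\<^sup>2b + ba\<^sup>2\<close>, so the operator of \<open>a\<close> lies in the image
  of \<open>X \<mapsto> A\<^sup>2X + XA\<^sup>2\<close>. This property is invariant under similarity and passes to the diagonal
  blocks of a block-diagonal matrix, hence to every Jordan block of \<open>A\<close>. But in characteristic 2
  the square of a Jordan block \<open>J\<close> of size 2 is scalar, so \<open>J\<^sup>2X + XJ\<^sup>2 = 2J\<^sup>2X = 0 \<noteq> J\<close>.\<close>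

definition in_sq_anticomm_range :: "nat \<Rightarrow> 'a::semiring_1 mat \<Rightarrow> bool" where
  "in_sq_anticomm_range n M \<longleftrightarrow> (\<exists>X \<in> carrier_mat n n. M = M * M * X + X * M * M)"

lemma two_eq_zero_CHAR_2:
  assumes "CHAR('a::semiring_1) = 2"
  shows "(2::'a) = 0"
  by (metis assms of_nat_CHAR of_nat_numeral)

lemma mat_add_self_CHAR_2:
  fixes M :: "'a::semiring_1 mat"
  assumes "CHAR('a) = 2" and "M \<in> carrier_mat n m"
  shows "M + M = 0\<^sub>m n m"
  using assms(2) by (intro eq_matI) (auto simp flip: mult_2 simp: two_eq_zero_CHAR_2[OF assms(1)])

lemma in_sq_anticomm_range_CHAR_2:
  fixes A B C :: "'a::semiring_1 mat"
  assumes "CHAR('a) = 2"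
    and A: "A \<in> carrier_mat n n" and B: "B \<in> carrier_mat n n"
    and AB: "A * B + B * A = C" and AC: "A * C + C * A = A"
  shows "in_sq_anticomm_range n A"
proof -
  have ABA: "A * (B * A) \<in> carrier_mat n n" using A B by simp
  have "A = A * (A * B + B * A) + (A * B + B * A) * A"
    using AB AC by simp
  also have "\<dots> = A * (A * B) + (A * (B * A) + A * (B * A)) + B * (A * A)"
    using A B by (simp add: mult_add_distrib_mat[of A n n "A * B" n "B * A"]
        add_mult_distrib_mat[of "A * B" n n "B * A" A n] assoc_add_mat[of _ n n])
  also have "\<dots> = A * A * B + B * A * A"
    using A B by (simp add: mat_add_self_CHAR_2[OF assms(1) ABA])
  finally show ?thesis
    unfolding in_sq_anticomm_range_def using B by blast
qed

lemma mult_conj_mat: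
  fixes M N P Q :: "'a::semiring_1 mat"
  assumes M: "M \<in> carrier_mat n n" and N: "N \<in> carrier_mat n n"
    and P: "P \<in> carrier_mat n n" and Q: "Q \<in> carrier_mat n n" and QP: "Q * P = 1\<^sub>m n"
  shows "P * (M * N) * Q = (P * M * Q) * (P * N * Q)"
proof -
  have "(P * M * Q) * (P * N * Q) = P * (M * (Q * P) * N) * Q"
    using M N P Q by (simp add: assoc_mult_mat[of _ n n _ n _ n])
  also have "M * (Q * P) = M"
    using M by (simp add: QP)
  finally show ?thesis
    using M N P Q by (simp add: assoc_mult_mat[of _ n n _ n _ n])
qed

lemma add_conj_mat:
  fixes M N P Q :: "'a::semiring_1 mat"
  assumes "M \<in> carrier_mat n n" "N \<in> carrier_mat n n" "P \<in> carrier_mat n n" "Q \<in> carrier_mat n n"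
  shows "P * (M + N) * Q = P * M * Q + P * N * Q"
  using assms by (simp add: mult_add_distrib_mat[of P n n] add_mult_distrib_mat[of _ n n _ Q n])

lemma similar_mat_carrier:
  assumes "similar_mat A B" and "B \<in> carrier_mat n n"
  shows "A \<in> carrier_mat n n"
proof -
  obtain m P Q where "{A, B, P, Q} \<subseteq> carrier_mat m m"
    using similar_matD[OF assms(1)] by (elim exE conjE) (rule that)
  then have "A \<in> carrier_mat m m" and "B \<in> carrier_mat m m"
    by blast+
  with assms(2) show ?thesis
    by (metis carrier_matD(1))
qed

lemma in_sq_anticomm_range_similar:
  assumes "similar_mat A B" and B: "B \<in> carrier_mat n n" and "in_sq_anticomm_range n B"
  shows "in_sq_anticomm_range n A"
proof -
  obtain P Q where wit: "similar_mat_wit A B P Q"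
    using assms(1) unfolding similar_mat_def by blast
  have A: "A \<in> carrier_mat n n"
    using similar_mat_carrier[OF assms(1) B] .
  have QP: "Q * P = 1\<^sub>m n" and A_eq: "A = P * B * Q"
    and P: "P \<in> carrier_mat n n" and Q: "Q \<in> carrier_mat n n"
    using similar_mat_witD2(2,3,6,7)[OF A wit] by this
  obtain X where X: "X \<in> carrier_mat n n" and B_eq: "B = B * B * X + X * B * B"
    using assms(3) unfolding in_sq_anticomm_range_def by blast
  note conj = mult_conj_mat[OF _ _ P Q QP]
  have BB: "B * B \<in> carrier_mat n n" and XB: "X * B \<in> carrier_mat n n"
    using B X by simp_all
  have "A = P * (B * B * X + X * B * B) * Q"
    unfolding A_eq by (rule arg_cong[where f = "\<lambda>Y. P * Y * Q", OF B_eq])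
  also have "\<dots> = P * (B * B * X) * Q + P * (X * B * B) * Q"
    by (rule add_conj_mat) (use BB XB B X P Q in simp_all)
  also have "P * (B * B * X) * Q = (P * B * Q) * (P * B * Q) * (P * X * Q)"
    unfolding conj[OF BB X] conj[OF B B] ..
  also have "P * (X * B * B) * Q = (P * X * Q) * (P * B * Q) * (P * B * Q)"
    unfolding conj[OF XB B] conj[OF X B] ..
  finally show ?thesis
    unfolding in_sq_anticomm_range_def A_eq[symmetric] using X P Q by (meson mult_carrier_mat)
qed

lemma mult_four_block_diag_left:
  fixes D1 D2 :: "'a::semiring_1 mat"
  assumes D1: "D1 \<in> carrier_mat n1 n1" and D2: "D2 \<in> carrier_mat n2 n2"
    and "Y1 \<in> carrier_mat n1 m1" "Y2 \<in> carrier_mat n1 m2" "Y3 \<in> carrier_mat n2 m1" "Y4 \<in> carrier_mat n2 m2"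
  shows "four_block_mat D1 (0\<^sub>m n1 n2) (0\<^sub>m n2 n1) D2 * four_block_mat Y1 Y2 Y3 Y4
    = four_block_mat (D1 * Y1) (D1 * Y2) (D2 * Y3) (D2 * Y4)"
  using assms by (simp add: mult_four_block_mat[OF D1 _ _ D2] left_mult_zero_mat)

lemma mult_four_block_diag_right:
  fixes D1 D2 :: "'a::semiring_1 mat"
  assumes D1: "D1 \<in> carrier_mat n1 n1" and D2: "D2 \<in> carrier_mat n2 n2"
    and "Y1 \<in> carrier_mat m1 n1" "Y2 \<in> carrier_mat m1 n2" "Y3 \<in> carrier_mat m2 n1" "Y4 \<in> carrier_mat m2 n2"
  shows "four_block_mat Y1 Y2 Y3 Y4 * four_block_mat D1 (0\<^sub>m n1 n2) (0\<^sub>m n2 n1) D2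
    = four_block_mat (Y1 * D1) (Y2 * D2) (Y3 * D1) (Y4 * D2)"
  using assms by (simp add: mult_four_block_mat[OF _ _ _ _ D1 _ _ D2] right_mult_zero_mat)

lemma split_block_four_block_mat:
  assumes "A1 \<in> carrier_mat n1 m1" "A2 \<in> carrier_mat n1 m2" "A3 \<in> carrier_mat n2 m1" "A4 \<in> carrier_mat n2 m2"
  shows "split_block (four_block_mat A1 A2 A3 A4) n1 m1 = (A1, A2, A3, A4)"
  using assms unfolding split_block_def Let_def by (auto intro!: eq_matI)

lemma in_sq_anticomm_range_four_block_diag:
  assumes M1: "M1 \<in> carrier_mat n1 n1" and M2: "M2 \<in> carrier_mat n2 n2"
    and "in_sq_anticomm_range (n1 + n2) (four_block_mat M1 (0\<^sub>m n1 n2) (0\<^sub>m n2 n1) M2)"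
  shows "in_sq_anticomm_range n1 M1" and "in_sq_anticomm_range n2 M2"
proof -
  define M where "M = four_block_mat M1 (0\<^sub>m n1 n2) (0\<^sub>m n2 n1) M2"
  have M: "M \<in> carrier_mat (n1 + n2) (n1 + n2)"
    unfolding M_def using M1 M2 by simp
  obtain X where X: "X \<in> carrier_mat (n1 + n2) (n1 + n2)" and M_eq: "M = M * M * X + X * M * M"
    using assms(3) unfolding in_sq_anticomm_range_def M_def by blast
  obtain X1 X2 X3 X4 where split: "split_block X n1 n1 = (X1, X2, X3, X4)"
    by (metis prod_cases4)
  have X1: "X1 \<in> carrier_mat n1 n1" and X2: "X2 \<in> carrier_mat n1 n2"
    and X3: "X3 \<in> carrier_mat n2 n1" and X4: "X4 \<in> carrier_mat n2 n2"
    and X_eq: "X = four_block_mat X1 X2 X3 X4"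
    using split_block[OF split, of n2 n2] X by auto
  have M1M1: "M1 * M1 \<in> carrier_mat n1 n1" and M2M2: "M2 * M2 \<in> carrier_mat n2 n2"
    using M1 M2 by simp_all
  have MM: "M * M = four_block_mat (M1 * M1) (0\<^sub>m n1 n2) (0\<^sub>m n2 n1) (M2 * M2)"
    unfolding M_def
    using mult_four_block_diag_left[OF M1 M2 M1 _ _ M2, of "0\<^sub>m n1 n2" "0\<^sub>m n2 n1"] M1 M2
    by (simp add: right_mult_zero_mat)
  have "M * M * X + X * M * M = M * M * X + X * (M * M)"
    using M X by simp
  also have "\<dots> = four_block_mat (M1 * M1 * X1) (M1 * M1 * X2) (M2 * M2 * X3) (M2 * M2 * X4)
      + four_block_mat (X1 * (M1 * M1)) (X2 * (M2 * M2)) (X3 * (M1 * M1)) (X4 * (M2 * M2))"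
    unfolding MM X_eq
    by (simp add: mult_four_block_diag_left[OF M1M1 M2M2 X1 X2 X3 X4]
        mult_four_block_diag_right[OF M1M1 M2M2 X1 X2 X3 X4])
  also have "\<dots> = four_block_mat (M1 * M1 * X1 + X1 * (M1 * M1)) (M1 * M1 * X2 + X2 * (M2 * M2))
      (M2 * M2 * X3 + X3 * (M1 * M1)) (M2 * M2 * X4 + X4 * (M2 * M2))"
    using M1 M2 X1 X2 X3 X4 by (intro add_four_block_mat) auto
  finally have M_blocks: "M = four_block_mat (M1 * M1 * X1 + X1 * (M1 * M1)) (M1 * M1 * X2 + X2 * (M2 * M2))
      (M2 * M2 * X3 + X3 * (M1 * M1)) (M2 * M2 * X4 + X4 * (M2 * M2))"
    using M_eq by (rule trans[rotated])
  have "split_block M n1 n1 = (M1 * M1 * X1 + X1 * (M1 * M1), M1 * M1 * X2 + X2 * (M2 * M2),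
      M2 * M2 * X3 + X3 * (M1 * M1), M2 * M2 * X4 + X4 * (M2 * M2))"
    unfolding M_blocks by (rule split_block_four_block_mat) (use M1 M2 X1 X2 X3 X4 in auto)
  moreover have "split_block M n1 n1 = (M1, 0\<^sub>m n1 n2, 0\<^sub>m n2 n1, M2)"
    unfolding M_def by (rule split_block_four_block_mat) (use M1 M2 in auto)
  ultimately have "M1 = M1 * M1 * X1 + X1 * M1 * M1" and "M2 = M2 * M2 * X4 + X4 * M2 * M2"
    using M1 M2 X1 X4 by simp_all
  then show "in_sq_anticomm_range n1 M1" and "in_sq_anticomm_range n2 M2"
    unfolding in_sq_anticomm_range_def using X1 X4 by blast+
qed

lemma in_sq_anticomm_range_jordan_block:
  assumes "in_sq_anticomm_range (sum_list (map fst n_as)) (jordan_matrix n_as)"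
    and "(k, e) \<in> set n_as"
  shows "in_sq_anticomm_range k (jordan_block k e)"
  using assms
proof (induction n_as)
  case Nil
  then show ?case by simp
next
  case (Cons n_a n_as)
  obtain m a where n_a: "n_a = (m, a)"
    by fastforce
  have "in_sq_anticomm_range (m + sum_list (map fst n_as))
      (four_block_mat (jordan_block m a) (0\<^sub>m m (sum_list (map fst n_as)))
        (0\<^sub>m (sum_list (map fst n_as)) m) (jordan_matrix n_as))"
    using Cons.prems(1) unfolding n_a jordan_matrix_Cons by simp
  note blocks = in_sq_anticomm_range_four_block_diag[OF jordan_block_carrier jordan_matrix_carrier this]
  show ?case
    using Cons.prems(2) Cons.IH[OF blocks(2)] blocks(1) n_a by auto
qed

lemma not_in_sq_anticomm_range_jordan_block_2:
  assumes "CHAR('a::comm_ring_1) = 2"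
  shows "\<not> in_sq_anticomm_range 2 (jordan_block 2 (e::'a))"
proof
  let ?J = "jordan_block 2 e"
  assume "in_sq_anticomm_range 2 ?J"
  then obtain X where X: "X \<in> carrier_mat 2 2" and J_eq: "?J = ?J * ?J * X + X * ?J * ?J"
    unfolding in_sq_anticomm_range_def by blast
  have "1 = ?J $$ (0, 1)"
    by simp
  also have "\<dots> = (?J * ?J * X + X * ?J * ?J) $$ (0, 1)"
    by (subst J_eq) (rule refl)
  also have "\<dots> = 2 * (e * e * X $$ (0, 1)) + 2 * e * (X $$ (0, 0) + X $$ (1, 1))"
    using X by (simp add: scalar_prod_def eval_nat_numeral algebra_simps)
  also have "\<dots> = 0"
    by (simp add: two_eq_zero_CHAR_2[OF assms])
  finally show False
    by simp
qed

theorem lemma3p5: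
  fixes A B C :: "'a::alg_closed_field mat" and n :: nat
  assumes "CHAR('a) = 2"
    and "um_module n A B C"
    and "jordan_nf A n_as"
  shows "\<forall>(k, ev) \<in> set n_as. k \<noteq> 2"
proof -
  let ?J = "jordan_matrix n_as"
  have "A \<in> carrier_mat n n" and "in_sq_anticomm_range n A"
    using assms(2) in_sq_anticomm_range_CHAR_2[OF assms(1)] unfolding um_module_def by auto
  moreover have "similar_mat ?J A"
    using assms(3) similar_mat_sym unfolding jordan_nf_def by blast
  ultimately have "in_sq_anticomm_range n ?J" and "?J \<in> carrier_mat n n"
    using in_sq_anticomm_range_similar similar_mat_carrier by blast+
  then have "in_sq_anticomm_range (sum_list (map fst n_as)) ?J"
    by (metis carrier_matD(1) jordan_matrix_dim)
  then show ?thesis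
    using in_sq_anticomm_range_jordan_block not_in_sq_anticomm_range_jordan_block_2[OF assms(1)]
    by fastforce
qed

end
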